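(* Let $k$ be a positive integer and $L=\{\ell_1,\ldots,\ell_s\}\subset[0,k-1]$ with $\ell_1<\cdots<\ell_s$; suppose $L$ contains $b$ full runs of consecutive integers with lengths $m_1,\ldots,m_b$. For integers $n>k$, $0\le u\le k$ and $0\le i\le k$ let \[P_i^u=\sum_{j=0}^{i}(-1)^j\binom{u}{j}\binom{k-u}{i-j}\binom{n-k-u}{i-j},\] and let $P$ be the $s\times s$ matrix with $(i,j)$-entry $P_{k-\ell_j}^{\ell_i+1}$. Then, as $n\to\infty$ (with $k,L$ fixed), \[\det(P)=(-1)^sC\,n^{sk-(\ell_1+\cdots+\ell_s)-s}+O\!\left(n^{sk-(\ell_1+\cdots+\ell_s)-s-1}\right),\qquad C=\frac{\prod_{i=1}^s(\ell_i+1)}{\prod_{i=1}^b m_i!\,\prod_{i=1}^s(k-\ell_i-1)!}.\] In particular, $P$ is invertible for all sufficiently large $n$.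
   Context: $[a,b]=\{a,\ldots,b\}$. For $L=\{\ell_1<\cdots<\ell_s\}$, a subset $\{\ell_m,\ldots,\ell_{m+p}\}$ is a run if $\ell_{m+i}=\ell_m+i$ for $0\le i\le p$; it is a full run if moreover ($m=1$ or $\ell_{m-1}<\ell_m-1$) and ($m+p=s$ or $\ell_{m+p+1}>\ell_{m+p}+1$). The length of a run is its cardinality. Binomial coefficients $\binom{a}{c}$ are $0$ when $c<0$ or $c>a\ge0$. *)

theory Defs
  imports "Jordan_Normal_Form.Determinant" "HOL-Library.Landau_Symbols"
begin

definition elt :: "nat set \<Rightarrow> nat \<Rightarrow> nat" where
  "elt L i = sorted_list_of_set L ! i"

definition full_runs :: "nat set \<Rightarrow> nat set set" where
  "full_runs L = {R. \<exists>a p. R = {a..a+p} \<and> R \<subseteq> L \<and> (a = 0 \<or> a - 1 \<notin> L) \<and> a + p + 1 \<notin> L}"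

text \<open>P_i^u; the binomial with upper argument n-k-u (possibly negative for small n)
  is the generalized binomial coefficient.\<close>
definition Pcoef :: "nat \<Rightarrow> nat \<Rightarrow> nat \<Rightarrow> nat \<Rightarrow> real" where
  "Pcoef k n u i = (\<Sum>j=0..i. (-1)^j * real (u choose j) * real ((k - u) choose (i - j))
        * ((real_of_int (int n - int k - int u)) gchoose (i - j)))"

definition Pmat :: "nat \<Rightarrow> nat set \<Rightarrow> nat \<Rightarrow> real mat" where
  "Pmat k L n = mat (card L) (card L) (\<lambda>(i,j). Pcoef k n (elt L i + 1) (k - elt L j))"

end

theory Submission
  imports Defs
begin

text \<open>
  For \<open>u \<le> k\<close> the entry \<open>P\<^sup>u\<^sub>i\<close> is a polynomial in \<open>n\<close> of degree at most \<open>k - u\<close>, and only the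
  summand with \<open>i - j = k - u\<close> reaches that degree. Expanding \<open>det P\<close> by the Leibniz formula,
  every product has degree at most \<open>E = \<Sum>(k - \<ell>\<^sub>i - 1)\<close>, so \<open>det P = det \<Lambda> n\<^sup>E + O(n\<^sup>E\<^sup>-\<^sup>1)\<close>
  where \<open>\<Lambda>\<close> is the matrix of leading coefficients. Up to signs and the factors
  \<open>1/(k - \<ell>\<^sub>i - 1)!\<close> on its rows, \<open>\<Lambda>\<close> is \<open>N = (binom(\<ell>\<^sub>i + 1, \<ell>\<^sub>j))\<close>. Since
  \<open>binom(\<ell>\<^sub>i + 1, \<ell>\<^sub>j) = 0\<close> when \<open>\<ell>\<^sub>j > \<ell>\<^sub>i + 1\<close>, the matrix \<open>N\<close> is block lower triangular with one
  diagonal block per full run; the block of a run \<open>{a..<a+m}\<close> is a rescaling of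
  \<open>(binom(i + 1, j))\<^sub>i\<^sub>,\<^sub>j\<^sub><\<^sub>m\<close>, a product of two unitriangular matrices, and has determinant
  \<open>\<Prod>\<^sub>i\<^sub><\<^sub>m (a + i + 1) / m!\<close>. Hence \<open>det \<Lambda> = (-1)\<^sup>s C \<noteq> 0\<close>, which also gives invertibility
  for large \<open>n\<close>.
\<close>

section \<open>Leading terms of real sequences\<close>

definition has_leading_term :: "(nat \<Rightarrow> real) \<Rightarrow> real \<Rightarrow> real \<Rightarrow> bool" where
  "has_leading_term f c a \<longleftrightarrow> (\<lambda>n. f n - c * real n powr a) \<in> O(\<lambda>n. real n powr (a - 1))"

lemma bigo_real_powr_mono:
  assumes "a \<le> b"
  shows "(\<lambda>n::nat. real n powr a) \<in> O(\<lambda>n. real n powr b)"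
proof (rule bigoI[where c=1])
  show "\<forall>\<^sub>F n in at_top. norm (real n powr a) \<le> 1 * norm (real n powr b)"
    using eventually_ge_at_top[of "1::nat"] by eventually_elim (simp add: assms powr_mono)
qed

lemma bigo_const_mult_real_powr: "(\<lambda>n::nat. c * real n powr a) \<in> O(\<lambda>n. real n powr a)"
  by (rule bigoI[where c="\<bar>c\<bar>"]) (simp add: abs_mult)

lemma has_leading_term_imp_bigo:
  assumes "has_leading_term f c a"
  shows "f \<in> O(\<lambda>n. real n powr a)"
proof -
  have "(\<lambda>n. f n - c * real n powr a) \<in> O(\<lambda>n. real n powr a)"
    using landau_o.big_trans[OF assms[unfolded has_leading_term_def] bigo_real_powr_mono[of "a - 1" a]]
    by simp
  from sum_in_bigo(1)[OF this bigo_const_mult_real_powr[of c a]] show ?thesis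
    by simp
qed

lemma has_leading_term_mult:
  assumes f: "has_leading_term f c a" and g: "has_leading_term g d b"
  shows "has_leading_term (\<lambda>n. f n * g n) (c * d) (a + b)"
proof -
  have powr_shift: "(\<lambda>n::nat. real n powr (a - 1) * real n powr b) = (\<lambda>n. real n powr (a + b - 1))"
    "(\<lambda>n::nat. real n powr a * real n powr (b - 1)) = (\<lambda>n. real n powr (a + b - 1))"
    by (simp_all add: powr_add[symmetric] algebra_simps)
  have "(\<lambda>n. (f n - c * real n powr a) * g n) \<in> O(\<lambda>n. real n powr (a + b - 1))"
    using landau_o.big.mult[OF f[unfolded has_leading_term_def] has_leading_term_imp_bigo[OF g]]
    unfolding powr_shift .
  moreover have "(\<lambda>n. c * real n powr a * (g n - d * real n powr b)) \<in> O(\<lambda>n. real n powr (a + b - 1))"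
    using landau_o.big.mult[OF bigo_const_mult_real_powr[of c a] g[unfolded has_leading_term_def]]
    unfolding powr_shift .
  ultimately have "(\<lambda>n. (f n - c * real n powr a) * g n + c * real n powr a * (g n - d * real n powr b))
      \<in> O(\<lambda>n. real n powr (a + b - 1))"
    by (rule sum_in_bigo(1))
  then show ?thesis
    unfolding has_leading_term_def by (simp add: powr_add algebra_simps)
qed

lemma has_leading_term_cmult:
  assumes "has_leading_term f c a"
  shows "has_leading_term (\<lambda>n. K * f n) (K * c) a"
proof -
  have "(\<lambda>n. K * (f n - c * real n powr a)) \<in> O(\<lambda>n. real n powr (a - 1))"
    using landau_o.big.mult[OF bigo_const[of K] assms[unfolded has_leading_term_def]] by simp
  then show ?thesis
    unfolding has_leading_term_def by (simp add: algebra_simps)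
qed

lemma has_leading_term_sum:
  assumes "finite A" "\<And>i. i \<in> A \<Longrightarrow> has_leading_term (f i) (c i) a"
  shows "has_leading_term (\<lambda>n. \<Sum>i\<in>A. f i n) (\<Sum>i\<in>A. c i) a"
proof -
  have "(\<lambda>n. \<Sum>i\<in>A. f i n - c i * real n powr a) \<in> O(\<lambda>n. real n powr (a - 1))"
    by (rule big_sum_in_bigo) (use assms in \<open>simp add: has_leading_term_def\<close>)
  then show ?thesis
    unfolding has_leading_term_def by (simp add: sum_subtractf sum_distrib_right)
qed

lemma has_leading_term_one: "has_leading_term (\<lambda>n. 1) 1 0"
proof -
  have "\<forall>\<^sub>F n in at_top. (0::real) = 1 - 1 * real n powr 0"
    using eventually_ge_at_top[of "1::nat"] by eventually_elim simp
  from landau_o.big.in_cong[OF this] show ?thesis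
    unfolding has_leading_term_def by simp
qed

lemma has_leading_term_prod:
  assumes "finite A" "\<And>i. i \<in> A \<Longrightarrow> has_leading_term (f i) (c i) (a i)"
  shows "has_leading_term (\<lambda>n. \<Prod>i\<in>A. f i n) (\<Prod>i\<in>A. c i) (\<Sum>i\<in>A. a i)"
  using assms
proof (induction A rule: finite_induct)
  case empty
  then show ?case using has_leading_term_one by simp
next
  case (insert x F)
  have "has_leading_term (\<lambda>n. f x n * (\<Prod>i\<in>F. f i n)) (c x * (\<Prod>i\<in>F. c i)) (a x + (\<Sum>i\<in>F. a i))"
    by (rule has_leading_term_mult) (use insert in auto)
  then show ?case using insert by simp
qed

lemma has_leading_term_zero: "has_leading_term (\<lambda>n. 0) 0 a"
  unfolding has_leading_term_def by simp

lemma has_leading_term_zero_if_lower_degree: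
  assumes "has_leading_term f c a" "a \<le> b - 1"
  shows "has_leading_term f 0 b"
  using landau_o.big_trans[OF has_leading_term_imp_bigo[OF assms(1)] bigo_real_powr_mono[OF assms(2)]]
  unfolding has_leading_term_def by simp

lemma has_leading_term_linear: "has_leading_term (\<lambda>n. real n - d) 1 1"
proof -
  have ev: "\<forall>\<^sub>F n in at_top. - d = real n - d - 1 * real n powr 1"
    using eventually_ge_at_top[of "1::nat"] by eventually_elim simp
  have "(\<lambda>n::nat. - d) \<in> O(\<lambda>n. real n powr (1 - 1))"
  proof (rule bigoI[where c="\<bar>d\<bar>"])
    show "\<forall>\<^sub>F n in at_top. norm (- d) \<le> \<bar>d\<bar> * norm (real n powr (1 - 1))"
      using eventually_ge_at_top[of "1::nat"] by eventually_elim simp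
  qed
  then show ?thesis
    unfolding has_leading_term_def using landau_o.big.in_cong[OF ev] by (simp only:)
qed

lemma has_leading_term_gchoose:
  "has_leading_term (\<lambda>n. (real n - d) gchoose t) (1 / fact t) (real t)"
proof -
  have "has_leading_term (\<lambda>n. \<Prod>i\<in>{0..<t}. real n - (d + real i)) (\<Prod>i\<in>{0..<t}. 1) (\<Sum>i\<in>{0..<t}. 1)"
    by (rule has_leading_term_prod) (auto intro: has_leading_term_linear)
  then have "has_leading_term (\<lambda>n. 1 / fact t * (\<Prod>i\<in>{0..<t}. real n - (d + real i))) (1 / fact t) (real t)"
    using has_leading_term_cmult[of _ 1 "real t" "1 / fact t"] by simp
  then show ?thesis
    by (simp add: gbinomial_prod_rev algebra_simps)
qed

lemma eventually_nonzero_if_has_leading_term: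
  assumes "has_leading_term f c a" "c \<noteq> 0"
  shows "\<forall>\<^sub>F n in at_top. f n \<noteq> 0"
proof -
  from assms(1)[unfolded has_leading_term_def] obtain K where
    "\<forall>\<^sub>F n in at_top. norm (f n - c * real n powr a) \<le> K * norm (real n powr (a - 1))"
    by (elim landau_o.bigE) blast
  moreover have "\<forall>\<^sub>F n::nat in at_top. real n > K / \<bar>c\<bar> \<and> n \<ge> 1"
    using eventually_gt_at_top[of "nat \<lceil>K / \<bar>c\<bar>\<rceil>"] eventually_ge_at_top[of "1::nat"]
    by eventually_elim linarith
  ultimately show ?thesis
  proof eventually_elim
    case (elim n)
    define p where "p = real n powr a"
    have n_pos: "real n > 0" and p_pos: "p > 0"
      using elim by (simp_all add: p_def)
    have "\<bar>f n - c * p\<bar> \<le> K * (p / real n)"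
      using elim(1) n_pos by (simp add: p_def powr_diff)
    also have "\<dots> < \<bar>c\<bar> * p"
      using elim(2) n_pos p_pos assms(2) by (simp add: field_simps)
    finally show "f n \<noteq> 0"
      by (auto simp: abs_mult)
  qed
qed

section \<open>The entries of \<open>P\<close>\<close>

text \<open>The leading coefficient comes from the summand \<open>j = i - (k - u)\<close> of \<^const>\<open>Pcoef\<close>.\<close>

definition Pcoef_lead :: "nat \<Rightarrow> nat \<Rightarrow> nat \<Rightarrow> real" where
  "Pcoef_lead k u i =
    (if k - u \<le> i then (-1)^(i - (k - u)) * real (u choose (i - (k - u))) / fact (k - u) else 0)"

lemma has_leading_term_Pcoef:
  "has_leading_term (\<lambda>n. Pcoef k n u i) (Pcoef_lead k u i) (real (k - u))"
proof -
  define K where "K j = (-1)^j * real (u choose j) * real ((k - u) choose (i - j))" for j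
  define g where "g j n = K j * ((real n - real k - real u) gchoose (i - j))" for j n
  have summand: "has_leading_term (g j) (if i - j = k - u then K j / fact (k - u) else 0) (real (k - u))"
    for j
  proof (cases "i - j \<le> k - u")
    case True
    have lead: "has_leading_term (g j) (K j / fact (i - j)) (real (i - j))"
      unfolding g_def diff_diff_eq using has_leading_term_cmult[OF has_leading_term_gchoose] by simp
    show ?thesis
    proof (cases "i - j = k - u")
      case False
      then show ?thesis
        using has_leading_term_zero_if_lower_degree[OF lead] \<open>i - j \<le> k - u\<close> by simp
    qed (use lead in simp)
  next
    case False
    then have "g j = (\<lambda>n. 0)" "i - j \<noteq> k - u"
      by (simp_all add: g_def K_def fun_eq_iff binomial_eq_0)
    with has_leading_term_zero show ?thesis
      by simp
  qed
  have coeff: "(\<Sum>j=0..i. if i - j = k - u then K j / fact (k - u) else 0) = Pcoef_lead k u i"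
  proof (cases "k - u \<le> i")
    case True
    have "(\<Sum>j=0..i. if i - j = k - u then K j / fact (k - u) else 0) =
        (\<Sum>j=0..i. if j = i - (k - u) then K j / fact (k - u) else 0)"
      by (rule sum.cong) (use True in auto)
    also have "\<dots> = Pcoef_lead k u i"
      using True by (simp add: Pcoef_lead_def K_def)
    finally show ?thesis .
  next
    case False
    then have "i - j \<noteq> k - u" for j
      by auto
    with False show ?thesis
      by (simp add: Pcoef_lead_def)
  qed
  have Pcoef_eq: "Pcoef k n u i = (\<Sum>j=0..i. g j n)" for n
    unfolding Pcoef_def g_def K_def by simp
  have "has_leading_term (\<lambda>n. \<Sum>j=0..i. g j n)
      (\<Sum>j=0..i. if i - j = k - u then K j / fact (k - u) else 0) (real (k - u))"
    by (rule has_leading_term_sum) (simp_all add: summand)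
  then show ?thesis
    by (simp only: Pcoef_eq coeff)
qed

section \<open>Determinants\<close>

lemma det_mat_Leibniz:
  "det (mat n n (\<lambda>(i,j). f i j)) =
    (\<Sum>p\<in>{p. p permutes {0..<n}}. signof p * (\<Prod>i=0..<n. f i (p i)))"
proof -
  have "det (mat n n (\<lambda>(i,j). f i j)) =
      (\<Sum>p\<in>{p. p permutes {0..<n}}. signof p * (\<Prod>i=0..<n. mat n n (\<lambda>(i,j). f i j) $$ (i, p i)))"
    by (rule det_def') simp
  also have "\<dots> = (\<Sum>p\<in>{p. p permutes {0..<n}}. signof p * (\<Prod>i=0..<n. f i (p i)))"
  proof (rule sum.cong[OF refl])
    fix p assume "p \<in> {p. p permutes {0..<n}}"
    then have "i < n \<Longrightarrow> p i < n" for i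
      using permutes_in_image by fastforce
    then show "signof p * (\<Prod>i=0..<n. mat n n (\<lambda>(i,j). f i j) $$ (i, p i)) =
        signof p * (\<Prod>i=0..<n. f i (p i))"
      by (auto intro!: prod.cong)
  qed
  finally show ?thesis .
qed

lemma has_leading_term_det:
  assumes "\<And>i j. i < m \<Longrightarrow> j < m \<Longrightarrow> has_leading_term (\<lambda>n. F n i j) (G i j) (a i)"
  shows "has_leading_term (\<lambda>n. det (mat m m (\<lambda>(i,j). F n i j)))
    (det (mat m m (\<lambda>(i,j). G i j))) (\<Sum>i=0..<m. a i)"
  unfolding det_mat_Leibniz
proof (rule has_leading_term_sum)
  fix p assume "p \<in> {p. p permutes {0..<m}}"
  then have "i < m \<Longrightarrow> p i < m" for i
    using permutes_in_image by fastforce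
  then show "has_leading_term (\<lambda>n. signof p * (\<Prod>i=0..<m. F n i (p i)))
      (signof p * (\<Prod>i=0..<m. G i (p i))) (\<Sum>i=0..<m. a i)"
    by (intro has_leading_term_cmult has_leading_term_prod) (auto intro: assms)
qed (simp add: finite_permutations)

lemma det_mat_scale_rows_cols:
  "det (mat n n (\<lambda>(i,j). \<alpha> i * \<beta> j * g i j)) =
    (\<Prod>i=0..<n. \<alpha> i) * (\<Prod>i=0..<n. \<beta> i) * det (mat n n (\<lambda>(i,j). g i j))"
  unfolding det_mat_Leibniz sum_distrib_left
proof (rule sum.cong[OF refl])
  fix p assume "p \<in> {p. p permutes {0..<n}}"
  then have "(\<Prod>i=0..<n. \<beta> (p i)) = (\<Prod>i=0..<n. \<beta> i)"
    using prod.permute[of p "{0..<n}" \<beta>] by (simp add: comp_def)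
  then show "signof p * (\<Prod>i=0..<n. \<alpha> i * \<beta> (p i) * g i (p i)) =
      (\<Prod>i=0..<n. \<alpha> i) * (\<Prod>i=0..<n. \<beta> i) * (signof p * (\<Prod>i=0..<n. g i (p i)))"
    by (simp add: prod.distrib)
qed

lemma det_mat_block_lower_triangular:
  fixes f :: "nat \<Rightarrow> nat \<Rightarrow> 'a :: idom"
  assumes "\<And>i j. i < p \<Longrightarrow> p \<le> j \<Longrightarrow> j < p + q \<Longrightarrow> f i j = 0"
  shows "det (mat (p + q) (p + q) (\<lambda>(i,j). f i j)) =
    det (mat p p (\<lambda>(i,j). f i j)) * det (mat q q (\<lambda>(i,j). f (p + i) (p + j)))"
proof -
  have "mat (p + q) (p + q) (\<lambda>(i,j). f i j) =
      four_block_mat (mat p p (\<lambda>(i,j). f i j)) (0\<^sub>m p q)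
        (mat q p (\<lambda>(i,j). f (p + i) j)) (mat q q (\<lambda>(i,j). f (p + i) (p + j)))"
    by (rule eq_matI) (auto simp: assms)
  also have "det \<dots> = det (mat p p (\<lambda>(i,j). f i j)) * det (mat q q (\<lambda>(i,j). f (p + i) (p + j)))"
    by (rule det_four_block_mat_upper_right_zero) auto
  finally show ?thesis .
qed

lemma invertible_mat_if_det_nonzero:
  assumes "A \<in> carrier_mat n n" "det A \<noteq> (0::real)"
  shows "invertible_mat A"
proof -
  have "A \<in> Units (ring_mat TYPE(real) n undefined)"
    by (rule det_non_zero_imp_unit[OF assms])
  then obtain B where "B \<in> carrier_mat n n" "B * A = 1\<^sub>m n" "A * B = 1\<^sub>m n"
    unfolding Units_def ring_mat_def by auto
  then show ?thesis
    using assms(1) unfolding invertible_mat_def inverts_mat_def by auto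
qed

section \<open>Binomial matrices\<close>

lemma pascal_mat_mult_bidiagonal:
  "mat m m (\<lambda>(i,j). real (i choose j)) * mat m m (\<lambda>(i,j). if i = j \<or> i + 1 = j then 1 else 0) =
    mat m m (\<lambda>(i,j). real ((i + 1) choose j))"
proof (rule eq_matI)
  fix i j assume "i < dim_row (mat m m (\<lambda>(i,j). real ((i + 1) choose j)))"
    "j < dim_col (mat m m (\<lambda>(i,j). real ((i + 1) choose j)))"
  then have i: "i < m" and j: "j < m" by auto
  have "(\<Sum>t=0..<m. real (i choose t) * (if t = j \<or> t + 1 = j then 1 else 0)) =
      (\<Sum>t=0..<m. (if t = j then real (i choose t) else 0) + (if t = j - 1 \<and> j > 0 then real (i choose t) else 0))"
    by (rule sum.cong) auto
  also have "\<dots> = real ((i + 1) choose j)"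
    using j by (cases j) (simp_all add: sum.distrib)
  finally show "(mat m m (\<lambda>(i,j). real (i choose j)) *
      mat m m (\<lambda>(i,j). if i = j \<or> i + 1 = j then 1 else 0)) $$ (i, j) =
      mat m m (\<lambda>(i,j). real ((i + 1) choose j)) $$ (i, j)"
    using i j by (simp add: scalar_prod_def)
qed auto

lemma det_shifted_pascal_mat: "det (mat m m (\<lambda>(i,j). real ((i + 1) choose j))) = 1"
proof -
  define A where "A = mat m m (\<lambda>(i,j). real (i choose j))"
  define B where "B = mat m m (\<lambda>(i,j). if i = j \<or> i + 1 = j then 1 else (0::real))"
  have A: "A \<in> carrier_mat m m" and B: "B \<in> carrier_mat m m"
    by (simp_all add: A_def B_def)
  have "diag_mat A = replicate m 1" "diag_mat B = replicate m 1"
    by (simp_all add: diag_mat_def A_def B_def list_eq_iff_nth_eq)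
  moreover have "det A = prod_list (diag_mat A)"
    by (rule det_lower_triangular[OF _ A]) (auto simp: A_def)
  moreover have "det B = prod_list (diag_mat B)"
    by (rule det_upper_triangular[OF _ B]) (auto simp: B_def upper_triangular_def)
  ultimately show ?thesis
    using det_mult[OF A B] pascal_mat_mult_bidiagonal[of m] by (simp add: A_def B_def)
qed

lemma of_nat_binomial_shift:
  "real ((a + i + 1) choose (a + j)) =
    fact (a + i + 1) / fact (i + 1) * (fact j / fact (a + j)) * real ((i + 1) choose j)"
proof (cases "j \<le> i + 1")
  case True
  have "real ((a + i + 1) choose (a + j)) = fact (a + i + 1) / (fact (a + j) * fact (i + 1 - j))"
    using binomial_fact[of "a + j" "a + i + 1"] True by simp
  moreover have "real ((i + 1) choose j) = fact (i + 1) / (fact j * fact (i + 1 - j))"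
    using binomial_fact[of j "i + 1"] True by simp
  ultimately show ?thesis
    by simp
next
  case False
  then show ?thesis
    by (simp add: binomial_eq_0)
qed

lemma det_run_binomial_mat:
  "det (mat m m (\<lambda>(i,j). real ((a + i + 1) choose (a + j)))) * fact m = (\<Prod>i=0..<m. real (a + i + 1))"
proof -
  define \<alpha> where "\<alpha> i = fact (a + i + 1) / (fact (i + 1) :: real)" for i
  define \<beta> where "\<beta> j = fact j / (fact (a + j) :: real)" for j
  have "mat m m (\<lambda>(i,j). real ((a + i + 1) choose (a + j))) =
      mat m m (\<lambda>(i,j). \<alpha> i * \<beta> j * real ((i + 1) choose j))"
    by (rule cong_mat) (simp_all only: of_nat_binomial_shift \<alpha>_def \<beta>_def split)
  then have "det (mat m m (\<lambda>(i,j). real ((a + i + 1) choose (a + j)))) =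
      (\<Prod>i=0..<m. \<alpha> i * \<beta> i)"
    by (simp only: det_mat_scale_rows_cols det_shifted_pascal_mat prod.distrib mult_1_right)
  also have "\<dots> = (\<Prod>i=0..<m. real (a + i + 1) / real (i + 1))"
    by (rule prod.cong) (simp_all add: \<alpha>_def \<beta>_def field_simps del: of_nat_add of_nat_Suc)
  finally show ?thesis
    by (simp add: fact_prod_Suc prod_dividef)
qed

section \<open>Sorted elements and full runs\<close>

lemma sorted_list_of_set_Un_less:
  fixes A B :: "'a :: linorder set"
  assumes "finite A" "finite B" "\<And>x y. x \<in> A \<Longrightarrow> y \<in> B \<Longrightarrow> x < y"
  shows "sorted_list_of_set (A \<union> B) = sorted_list_of_set A @ sorted_list_of_set B"
proof -
  have "A \<inter> B = {}"
    using assms(3) by fastforce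
  then have "sorted_wrt (<) (sorted_list_of_set A @ sorted_list_of_set B) \<and>
      set (sorted_list_of_set A @ sorted_list_of_set B) = A \<union> B \<and>
      length (sorted_list_of_set A @ sorted_list_of_set B) = card (A \<union> B)"
    using assms by (simp add: sorted_wrt_append card_Un_disjoint)
  moreover have "finite (A \<union> B)"
    using assms by simp
  ultimately show ?thesis
    using sorted_list_of_set_unique by blast
qed

lemma elt_mem:
  assumes "finite L" "i < card L"
  shows "elt L i \<in> L"
  using assms nth_mem[of i "sorted_list_of_set L"] by (simp add: elt_def)

lemma prod_elt:
  assumes "finite L"
  shows "(\<Prod>i<card L. f (elt L i)) = (\<Prod>x\<in>L. f x)"
  using prod.reindex_bij_betw[OF bij_betw_nth[of "sorted_list_of_set L" "{..<card L}" L], of f] assms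
  by (simp add: elt_def)

lemma
  assumes "finite L" "\<And>x. x \<in> L \<Longrightarrow> x < a"
  shows elt_Un_run_low: "i < card L \<Longrightarrow> elt (L \<union> {a..<a + m}) i = elt L i"
    and elt_Un_run_high: "i < m \<Longrightarrow> elt (L \<union> {a..<a + m}) (card L + i) = a + i"
proof -
  have "sorted_list_of_set (L \<union> {a..<a + m}) = sorted_list_of_set L @ [a..<a + m]"
    using sorted_list_of_set_Un_less[of L "{a..<a + m}"] assms by fastforce
  then show "i < card L \<Longrightarrow> elt (L \<union> {a..<a + m}) i = elt L i"
    and "i < m \<Longrightarrow> elt (L \<union> {a..<a + m}) (card L + i) = a + i"
    by (simp_all add: elt_def nth_append)
qed

lemma finite_set_split_last_run:
  fixes L :: "nat set"
  assumes "finite L" "L \<noteq> {}"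
  obtains L' a m where "L = L' \<union> {a..<a + m}" "m > 0" "\<And>x. x \<in> L' \<Longrightarrow> x + 1 < a"
proof -
  define y where "y = Max L"
  have y: "y \<in> L" "\<And>x. x \<in> L \<Longrightarrow> x \<le> y"
    using assms by (simp_all add: y_def)
  define a where "a = (LEAST a. {a..y} \<subseteq> L)"
  have run: "{a..y} \<subseteq> L"
    unfolding a_def by (rule LeastI[of _ y]) (use y in auto)
  have "a \<le> y"
    unfolding a_def by (rule Least_le) (use y in auto)
  have gap: "a - 1 \<notin> L" if "a > 0"
  proof
    assume "a - 1 \<in> L"
    have "{a - 1..y} \<subseteq> L"
    proof
      fix x assume "x \<in> {a - 1..y}"
      then have "x = a - 1 \<or> x \<in> {a..y}"
        by auto
      then show "x \<in> L"
        using run \<open>a - 1 \<in> L\<close> by blast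
    qed
    then have "a \<le> a - 1"
      unfolding a_def by (rule Least_le)
    with \<open>a > 0\<close> show False by simp
  qed
  have "x + 1 < a" if "x \<in> L - {a..y}" for x
  proof -
    have "x < a"
      using that y(2) by fastforce
    moreover have "x + 1 \<noteq> a"
      using that gap by fastforce
    ultimately show ?thesis
      by simp
  qed
  moreover have "L = (L - {a..y}) \<union> {a..<a + (y + 1 - a)}" "y + 1 - a > 0"
    using run \<open>a \<le> y\<close> by auto
  ultimately show ?thesis
    using that by blast
qed

lemma interval_subset_Un_separated:
  fixes A B :: "nat set"
  assumes "{c..d} \<subseteq> A \<union> B" "\<And>x y. x \<in> A \<Longrightarrow> y \<in> B \<Longrightarrow> x + 1 < y"
  shows "{c..d} \<subseteq> A \<or> {c..d} \<subseteq> B"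
proof (rule ccontr)
  assume "\<not> ({c..d} \<subseteq> A \<or> {c..d} \<subseteq> B)"
  then obtain x y where xy: "x \<in> {c..d} \<inter> A" "y \<in> {c..d} \<inter> B"
    using assms(1) by blast
  define z where "z = Max ({c..d} \<inter> A)"
  have fin: "finite ({c..d} \<inter> A)"
    by simp
  have z: "z \<in> {c..d} \<inter> A"
    unfolding z_def using Max_in[OF fin] xy(1) by blast
  have "z + 1 \<notin> {c..d} \<inter> A"
    using Max_ge[OF fin, of "z + 1"] unfolding z_def by fastforce
  moreover have "z + 1 \<in> {c..d}"
    using assms(2)[of z y] z xy(2) by auto
  ultimately have "z + 1 \<in> B"
    using assms(1) by blast
  then show False
    using assms(2)[of z "z + 1"] z by blast
qed

lemma full_runs_Un_separated:
  assumes "\<And>x y. x \<in> A \<Longrightarrow> y \<in> B \<Longrightarrow> x + 1 < y"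
  shows "full_runs (A \<union> B) = full_runs A \<union> full_runs B"
proof (intro equalityI subsetI)
  fix R assume "R \<in> full_runs (A \<union> B)"
  then obtain c p where R: "R = {c..c + p}" "R \<subseteq> A \<union> B" "c = 0 \<or> c - 1 \<notin> A \<union> B" "c + p + 1 \<notin> A \<union> B"
    unfolding full_runs_def by blast
  then have "R \<subseteq> A \<or> R \<subseteq> B"
    using interval_subset_Un_separated[of c "c + p" A B] assms by simp
  then show "R \<in> full_runs A \<union> full_runs B"
    using R unfolding full_runs_def by blast
next
  fix R assume "R \<in> full_runs A \<union> full_runs B"
  then consider "R \<in> full_runs A" | "R \<in> full_runs B" by blast
  then show "R \<in> full_runs (A \<union> B)"
  proof cases
    case 1
    then obtain c p where "R = {c..c + p}" "R \<subseteq> A" "c = 0 \<or> c - 1 \<notin> A" "c + p + 1 \<notin> A"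
      unfolding full_runs_def by blast
    moreover have "c \<in> A" "c + p \<in> A"
      using \<open>R \<subseteq> A\<close> \<open>R = {c..c + p}\<close> by auto
    then have "c - 1 \<notin> B" "c + p + 1 \<notin> B"
      using assms by force+
    ultimately show ?thesis
      unfolding full_runs_def by blast
  next
    case 2
    then obtain c p where "R = {c..c + p}" "R \<subseteq> B" "c = 0 \<or> c - 1 \<notin> B" "c + p + 1 \<notin> B"
      unfolding full_runs_def by blast
    moreover have "c \<in> B"
      using \<open>R \<subseteq> B\<close> \<open>R = {c..c + p}\<close> by auto
    then have "c - 1 \<notin> A" "c + p + 1 \<notin> A"
      using assms by force+
    ultimately show ?thesis
      unfolding full_runs_def by blast
  qed
qed

lemma full_runs_interval: "full_runs {a..a + p} = {{a..a + p}}"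
proof -
  have "R = {a..a + p}" if run: "R \<in> full_runs {a..a + p}" for R
  proof -
    obtain c q where R: "R = {c..c + q}" "R \<subseteq> {a..a + p}"
      "c = 0 \<or> c - 1 \<notin> {a..a + p}" "c + q + 1 \<notin> {a..a + p}"
      using run unfolding full_runs_def by blast
    then have "a \<le> c" "c + q \<le> a + p"
      by auto
    with R(3,4) have "c = a" "c + q = a + p"
      by auto
    with R(1) show ?thesis
      by simp
  qed
  moreover have "{a..a + p} \<in> full_runs {a..a + p}"
    unfolding full_runs_def mem_Collect_eq by (rule exI[of _ a], rule exI[of _ p]) auto
  ultimately show ?thesis
    by blast
qed

lemma full_runs_subset: "R \<in> full_runs L \<Longrightarrow> R \<subseteq> L"
  unfolding full_runs_def by blast

lemma finite_full_runs: "finite L \<Longrightarrow> finite (full_runs L)"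
  by (rule finite_subset[of _ "Pow L"]) (auto dest: full_runs_subset)

lemma prod_full_runs_Un_run:
  assumes "finite L" "m > 0" "\<And>x. x \<in> L \<Longrightarrow> x + 1 < a"
  shows "(\<Prod>R\<in>full_runs (L \<union> {a..<a + m}). f R) = f {a..<a + m} * (\<Prod>R\<in>full_runs L. f R)"
proof -
  have "{a..<a + m} = {a..a + (m - 1)}"
    using assms(2) by auto
  then have runs: "full_runs (L \<union> {a..<a + m}) = insert {a..<a + m} (full_runs L)"
    using assms(3) full_runs_Un_separated[of L "{a..<a + m}"] full_runs_interval[of a "m - 1"]
    by fastforce
  have "a \<in> {a..<a + m}" "a \<notin> L"
    using assms(2,3) by fastforce+
  then have "{a..<a + m} \<notin> full_runs L"
    using full_runs_subset by blast
  then show ?thesis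
    unfolding runs by (rule prod.insert[OF finite_full_runs[OF assms(1)]])
qed

definition binomial_mat :: "nat set \<Rightarrow> real mat" where
  "binomial_mat L = mat (card L) (card L) (\<lambda>(i,j). real ((elt L i + 1) choose elt L j))"

lemma det_binomial_mat_Un_run:
  assumes "finite L" "\<And>x. x \<in> L \<Longrightarrow> x + 1 < a"
  shows "det (binomial_mat (L \<union> {a..<a + m})) * fact m =
    det (binomial_mat L) * (\<Prod>i=0..<m. real (a + i + 1))"
proof -
  let ?L = "L \<union> {a..<a + m}"
  have lt: "x \<in> L \<Longrightarrow> x < a" for x
    using assms(2) by fastforce
  have "L \<inter> {a..<a + m} = {}"
    using lt by fastforce
  then have card: "card ?L = card L + m"
    using assms(1) by (simp add: card_Un_disjoint)
  have "det (binomial_mat ?L) =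
      det (mat (card L) (card L) (\<lambda>(i,j). real ((elt ?L i + 1) choose elt ?L j))) *
      det (mat m m (\<lambda>(i,j). real ((elt ?L (card L + i) + 1) choose elt ?L (card L + j))))"
    unfolding binomial_mat_def card
  proof (rule det_mat_block_lower_triangular)
    fix i j assume ij: "i < card L" "card L \<le> j" "j < card L + m"
    then have "elt ?L i = elt L i" "elt ?L j = a + (j - card L)"
      using elt_Un_run_low[OF assms(1) lt] elt_Un_run_high[OF assms(1) lt, of "j - card L"] by simp_all
    moreover have "elt L i + 1 < a"
      using assms(2)[OF elt_mem[OF assms(1) ij(1)]] .
    ultimately have "elt ?L i + 1 < elt ?L j"
      by simp
    then show "real ((elt ?L i + 1) choose elt ?L j) = 0"
      by simp
  qed
  also have "\<dots> = det (binomial_mat L) * det (mat m m (\<lambda>(i,j). real ((a + i + 1) choose (a + j))))"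
    unfolding binomial_mat_def
    by (auto intro!: arg_cong2[where f="(*)"] arg_cong[where f=det] cong_mat
        simp: elt_Un_run_low[OF assms(1) lt] elt_Un_run_high[OF assms(1) lt])
  finally show ?thesis
    using det_run_binomial_mat[of m a] by (simp add: mult.assoc)
qed

lemma det_binomial_mat:
  assumes "finite L"
  shows "det (binomial_mat L) * (\<Prod>R\<in>full_runs L. fact (card R)) = (\<Prod>x\<in>L. real (x + 1))"
  using assms
proof (induction "card L" arbitrary: L rule: less_induct)
  case less
  show ?case
  proof (cases "L = {}")
    case True
    then show ?thesis
      by (simp add: binomial_mat_def full_runs_def det_def)
  next
    case False
    then obtain L' a m where L: "L = L' \<union> {a..<a + m}" "m > 0" and sep: "\<And>x. x \<in> L' \<Longrightarrow> x + 1 < a"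
      using finite_set_split_last_run[OF less.prems] by blast
    have fin: "finite L'"
      using less.prems L by simp
    have disj: "L' \<inter> {a..<a + m} = {}"
      using sep by fastforce
    have "card L' < card L"
      using L fin disj by (simp add: card_Un_disjoint)
    note IH = less.hyps[OF this fin]
    have runs: "(\<Prod>R\<in>full_runs L. fact (card R)) = fact m * (\<Prod>R\<in>full_runs L'. fact (card R))"
      using prod_full_runs_Un_run[OF fin L(2) sep, of "\<lambda>R. fact (card R)"] L(1) by simp
    have "(\<Prod>x\<in>L. real (x + 1)) = (\<Prod>x\<in>L'. real (x + 1)) * (\<Prod>x\<in>{a..<a + m}. real (x + 1))"
      unfolding L(1) using fin disj by (intro prod.union_disjoint) auto
    also have "(\<Prod>x\<in>{a..<a + m}. real (x + 1)) = (\<Prod>i=0..<m. real (a + i + 1))"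
      using prod.shift_bounds_nat_ivl[of "\<lambda>x. real (x + 1)" 0 a m] by (simp add: add.commute)
    finally have elements: "(\<Prod>x\<in>L. real (x + 1)) = (\<Prod>x\<in>L'. real (x + 1)) * (\<Prod>i=0..<m. real (a + i + 1))" .
    have "det (binomial_mat L) * fact m = det (binomial_mat L') * (\<Prod>i=0..<m. real (a + i + 1))"
      using det_binomial_mat_Un_run[OF fin sep, of m] L(1) by simp
    then show ?thesis
      unfolding runs elements IH[symmetric] by (metis mult.assoc mult.commute)
  qed
qed

section \<open>The leading coefficient of \<open>det P\<close>\<close>

lemma Pcoef_lead_eq:
  assumes "x < k" "z \<le> k"
  shows "Pcoef_lead k (x + 1) (k - z) = (-1)^(x + 1) / fact (k - x - 1) * ((-1)^z * real ((x + 1) choose z))"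
proof (cases "z \<le> x + 1")
  case True
  have "((-1)::real)^(x + 1 - z) = (-1)^(x + 1) * (-1)^z"
    using True by (simp add: neg_one_power_add_eq_neg_one_power_diff[symmetric] power_add)
  moreover have "(x + 1) choose (x + 1 - z) = (x + 1) choose z"
    using True by (simp add: binomial_symmetric[symmetric])
  ultimately show ?thesis
    using assms True by (simp add: Pcoef_lead_def diff_diff_right)
next
  case False
  then show ?thesis
    using assms by (simp add: Pcoef_lead_def)
qed

lemma det_Pcoef_lead_mat:
  assumes "L \<subseteq> {..<k}"
  shows "det (mat (card L) (card L) (\<lambda>(i,j). Pcoef_lead k (elt L i + 1) (k - elt L j))) =
    (-1)^card L * ((\<Prod>i<card L. real (elt L i + 1)) /
      ((\<Prod>R\<in>full_runs L. fact (card R)) * (\<Prod>i<card L. fact (k - elt L i - 1))))"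
proof -
  let ?s = "card L"
  have fin: "finite L"
    using assms finite_subset by blast
  have lt: "i < ?s \<Longrightarrow> elt L i < k" for i
    using elt_mem[OF fin] assms by blast
  define \<alpha> where "\<alpha> i = (-1::real)^(elt L i + 1) / fact (k - elt L i - 1)" for i
  define \<beta> where "\<beta> j = (-1::real)^(elt L j)" for j
  have "mat ?s ?s (\<lambda>(i,j). Pcoef_lead k (elt L i + 1) (k - elt L j)) =
      mat ?s ?s (\<lambda>(i,j). \<alpha> i * \<beta> j * real ((elt L i + 1) choose elt L j))"
  proof (rule cong_mat)
    fix i j assume "i < ?s" "j < ?s"
    then show "(\<lambda>(i,j). Pcoef_lead k (elt L i + 1) (k - elt L j)) (i, j) =
        (\<lambda>(i,j). \<alpha> i * \<beta> j * real ((elt L i + 1) choose elt L j)) (i, j)"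
      by (simp only: case_prod_conv Pcoef_lead_eq[OF lt less_imp_le[OF lt]])
        (simp add: \<alpha>_def \<beta>_def mult.assoc)
  qed simp_all
  then have "det (mat ?s ?s (\<lambda>(i,j). Pcoef_lead k (elt L i + 1) (k - elt L j))) =
      (\<Prod>i=0..<?s. \<alpha> i * \<beta> i) * det (binomial_mat L)"
    by (simp add: det_mat_scale_rows_cols binomial_mat_def prod.distrib)
  also have "(\<Prod>i=0..<?s. \<alpha> i * \<beta> i) = (\<Prod>i<?s. (-1) / fact (k - elt L i - 1))"
  proof (rule prod.cong)
    have "(-1::real)^(e + 1) * (-1)^e = -1" for e
      using neg_one_power_add_eq_neg_one_power_diff[of e "e + 1"] by (simp add: power_add)
    then show "\<alpha> i * \<beta> i = (-1) / fact (k - elt L i - 1)" for i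
      by (simp add: \<alpha>_def \<beta>_def)
  qed (simp add: atLeast0LessThan)
  also have "\<dots> = (-1)^?s / (\<Prod>i<?s. fact (k - elt L i - 1))"
    by (simp only: prod_dividef prod_constant card_lessThan)
  also have "det (binomial_mat L) = (\<Prod>i<?s. real (elt L i + 1)) / (\<Prod>R\<in>full_runs L. fact (card R))"
    using det_binomial_mat[OF fin] prod_elt[OF fin, of "\<lambda>x. real (x + 1)"]
    by (simp add: finite_full_runs[OF fin] eq_divide_eq)
  finally show ?thesis
    by simp
qed

lemma has_leading_term_det_Pmat:
  assumes "L \<subseteq> {..<k}"
  shows "has_leading_term (\<lambda>n. det (Pmat k L n))
    (det (mat (card L) (card L) (\<lambda>(i,j). Pcoef_lead k (elt L i + 1) (k - elt L j))))
    (real (card L * k) - real (\<Sum>i<card L. elt L i) - real (card L))"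
proof -
  have lt: "i < card L \<Longrightarrow> elt L i < k" for i
    using elt_mem[of L i] assms finite_subset by blast
  have "(\<Sum>i=0..<card L. real (k - (elt L i + 1))) = (\<Sum>i<card L. real k - real (elt L i) - 1)"
    by (rule sum.cong) (auto simp: atLeast0LessThan of_nat_diff Suc_le_eq lt)
  also have "\<dots> = real (card L * k) - real (\<Sum>i<card L. elt L i) - real (card L)"
    by (simp add: sum_subtractf)
  finally have degree: "(\<Sum>i=0..<card L. real (k - (elt L i + 1))) =
      real (card L * k) - real (\<Sum>i<card L. elt L i) - real (card L)" .
  have "has_leading_term (\<lambda>n. det (mat (card L) (card L) (\<lambda>(i,j). Pcoef k n (elt L i + 1) (k - elt L j))))
      (det (mat (card L) (card L) (\<lambda>(i,j). Pcoef_lead k (elt L i + 1) (k - elt L j))))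
      (\<Sum>i=0..<card L. real (k - (elt L i + 1)))"
    by (rule has_leading_term_det) (rule has_leading_term_Pcoef)
  then show ?thesis
    unfolding Pmat_def degree .
qed

theorem lemma1:
  fixes k :: nat and L :: "nat set"
  assumes "k > 0" and "L \<subseteq> {0..k-1}"
  defines "s \<equiv> card L"
  defines "E \<equiv> real (s * k) - real (\<Sum>i<s. elt L i) - real s"
  defines "C \<equiv> (\<Prod>i<s. real (elt L i + 1)) /
      ((\<Prod>R\<in>full_runs L. fact (card R)) * (\<Prod>i<s. fact (k - elt L i - 1)))"
  shows "(\<lambda>n. det (Pmat k L n) - (-1)^s * C * real n powr E) \<in> O(\<lambda>n. real n powr (E - 1)) \<and>
         eventually (\<lambda>n. invertible_mat (Pmat k L n)) at_top"
proof
  have sub: "L \<subseteq> {..<k}"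
    using assms(1,2) by auto
  have lead: "has_leading_term (\<lambda>n. det (Pmat k L n)) ((-1)^s * C) E"
    unfolding s_def E_def C_def
    using has_leading_term_det_Pmat[OF sub] unfolding det_Pcoef_lead_mat[OF sub] .
  then show "(\<lambda>n. det (Pmat k L n) - (-1)^s * C * real n powr E) \<in> O(\<lambda>n. real n powr (E - 1))"
    unfolding has_leading_term_def .
  have "C \<noteq> 0"
    unfolding C_def by (cases "finite (full_runs L)") (simp_all add: prod_zero_iff)
  then have "\<forall>\<^sub>F n in at_top. det (Pmat k L n) \<noteq> 0"
    by (intro eventually_nonzero_if_has_leading_term[OF lead]) simp
  then show "\<forall>\<^sub>F n in at_top. invertible_mat (Pmat k L n)"
    by eventually_elim (rule invertible_mat_if_det_nonzero[of _ s], simp_all add: Pmat_def s_def)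
qed

end
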